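(* Let $m\le k\le n$ be positive integers and $\mathbf a_1,\dots,\mathbf a_n\in\mathbb R^m$, and let $w^*=\max\{[\det(\sum_{i\in S}\mathbf a_i\mathbf a_i^\top)]^{1/m}: S\subseteq[n],|S|=k\}$. Let $(\hat{\mathbf x},\hat w)$ be an optimal solution of the convex relaxation $$\max_{\mathbf x,w}\Big\{w:\ w\le \Big[\det\Big(\sum_{i\in[n]}x_i\mathbf a_i\mathbf a_i^\top\Big)\Big]^{1/m},\ \sum_{i\in[n]}x_i=k,\ \mathbf x\in[0,1]^n\Big\},$$ and let $\mathcal S$ be the random size-$k$ subset of $[n]$ (the output of the sampling algorithm) with $$\Pr[\mathcal S=S]=\frac{\prod_{j\in S}\hat x_j}{\sum_{\bar S\subseteq[n],|\bar S|=k}\prod_{i\in\bar S}\hat x_i}\quad\text{for every } S\subseteq[n],\ |S|=k.$$ Then this algorithm is a $\frac1e$-approximation, i.e. $$\Big\{\mathbb E\Big[\det\Big(\sum_{i\in\mathcal S}\mathbf a_i\mathbf a_i^\top\Big)\Big]\Big\}^{1/m}\ge \frac1e\,w^*.$$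
   Context: $[n]=\{1,\dots,n\}$. This is the $D$-optimal design problem without repetitions: choose $k$ of the $n$ distinct vectors to maximize the $m$-th root of the determinant of the sum of their outer products; $w^*$ is its optimal value. *)

theory Defs
  imports "HOL-Analysis.Analysis"
begin

definition outer :: "real ^ 'm \<Rightarrow> real ^ 'm ^ 'm" where
  "outer v = (\<chi> r c. v $ r * v $ c)"

definition info_mat :: "nat \<Rightarrow> (nat \<Rightarrow> real ^ 'm) \<Rightarrow> (nat \<Rightarrow> real) \<Rightarrow> real ^ 'm ^ 'm" where
  "info_mat n a x = (\<Sum>i\<in>{1..n}. x i *\<^sub>R outer (a i))"

definition subset_mat :: "(nat \<Rightarrow> real ^ 'm) \<Rightarrow> nat set \<Rightarrow> real ^ 'm ^ 'm" where
  "subset_mat a S = (\<Sum>i\<in>S. outer (a i))"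

definition ksubsets :: "nat \<Rightarrow> nat \<Rightarrow> nat set set" where
  "ksubsets n k = {S. S \<subseteq> {1..n} \<and> card S = k}"

definition w_star :: "nat \<Rightarrow> nat \<Rightarrow> (nat \<Rightarrow> real ^ 'm) \<Rightarrow> real" where
  "w_star n k a = Max ((\<lambda>S. root CARD('m) (det (subset_mat a S))) ` ksubsets n k)"

definition relax_feasible :: "nat \<Rightarrow> nat \<Rightarrow> (nat \<Rightarrow> real ^ 'm) \<Rightarrow> (nat \<Rightarrow> real) \<Rightarrow> real \<Rightarrow> bool" where
  "relax_feasible n k a x w \<longleftrightarrow>
     w \<le> root CARD('m) (det (info_mat n a x)) \<and>
     (\<Sum>i\<in>{1..n}. x i) = real k \<and>
     (\<forall>i\<in>{1..n}. 0 \<le> x i \<and> x i \<le> 1)"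

definition relax_optimal :: "nat \<Rightarrow> nat \<Rightarrow> (nat \<Rightarrow> real ^ 'm) \<Rightarrow> (nat \<Rightarrow> real) \<Rightarrow> real \<Rightarrow> bool" where
  "relax_optimal n k a x w \<longleftrightarrow> relax_feasible n k a x w \<and>
     (\<forall>x' w'. relax_feasible n k a x' w' \<longrightarrow> w' \<le> w)"

definition sample_prob :: "nat \<Rightarrow> nat \<Rightarrow> (nat \<Rightarrow> real) \<Rightarrow> nat set \<Rightarrow> real" where
  "sample_prob n k x S = (\<Prod>j\<in>S. x j) / (\<Sum>T\<in>ksubsets n k. \<Prod>i\<in>T. x i)"

definition expected_det :: "nat \<Rightarrow> nat \<Rightarrow> (nat \<Rightarrow> real ^ 'm) \<Rightarrow> (nat \<Rightarrow> real) \<Rightarrow> real" where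
  "expected_det n k a x = (\<Sum>S\<in>ksubsets n k. sample_prob n k x S * det (subset_mat a S))"

end

theory Submission
  imports Defs "HOL-Computational_Algebra.Polynomial"
begin

text \<open>By Cauchy-Binet, det (sum x_i a_i a_i^T) is the sum over the m-subsets R of [n] of
  prod x R * det A_R, and det A_S of a sampled k-set S is the sum of det A_R over its m-subsets.
  Hence Z * E[det A_S], with Z = e_k(x) the normalising constant, weights det A_R by
  prod x R * e_(k-m)(x on [n] - R). Maclaurin-type bounds on elementary symmetric functions give
  e_k(x) \<le> e^m * e_(k-m)(x on [n] - R) for x in [0,1]^n summing to k, so
  E[det A_S] \<ge> e^(-m) * det (sum x_i a_i a_i^T) \<ge> e^(-m) * w^m, and w \<ge> w* since the
  indicator vector of every k-set is feasible for the relaxation.\<close>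

definition elem_sym :: "('a \<Rightarrow> real) \<Rightarrow> 'a set \<Rightarrow> nat \<Rightarrow> real" where
  "elem_sym x A l = (\<Sum>S | S \<subseteq> A \<and> card S = l. prod x S)"

lemma elem_sym_0 [simp]: "finite A \<Longrightarrow> elem_sym x A 0 = 1"
proof -
  assume "finite A"
  then have "{S. S \<subseteq> A \<and> card S = 0} = {{}}" by (auto dest: finite_subset)
  then show ?thesis by (simp add: elem_sym_def)
qed

lemma elem_sym_empty_Suc [simp]: "elem_sym x {} (Suc l) = 0"
  by (simp add: elem_sym_def)

lemma subsets_card_insert_Suc:
  assumes "finite A" "u \<notin> A"
  shows "{S. S \<subseteq> insert u A \<and> card S = Suc l} =
    {S. S \<subseteq> A \<and> card S = Suc l} \<union> insert u ` {S. S \<subseteq> A \<and> card S = l}"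
proof (intro equalityI subsetI)
  fix S assume S: "S \<in> {S. S \<subseteq> insert u A \<and> card S = Suc l}"
  then have "finite S" using assms(1) finite_subset by auto
  show "S \<in> {S. S \<subseteq> A \<and> card S = Suc l} \<union> insert u ` {S. S \<subseteq> A \<and> card S = l}"
  proof (cases "u \<in> S")
    case True
    then have "S = insert u (S - {u})" "S - {u} \<subseteq> A" "card (S - {u}) = l"
      using S \<open>finite S\<close> by auto
    then show ?thesis by blast
  qed (use S in auto)
next
  fix S assume "S \<in> {S. S \<subseteq> A \<and> card S = Suc l} \<union> insert u ` {S. S \<subseteq> A \<and> card S = l}"
  then show "S \<in> {S. S \<subseteq> insert u A \<and> card S = Suc l}"
  proof
    assume "S \<in> insert u ` {S. S \<subseteq> A \<and> card S = l}"
    then obtain T where "T \<subseteq> A" "card T = l" "S = insert u T" by blast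
    moreover have "finite T" "u \<notin> T" using \<open>T \<subseteq> A\<close> assms finite_subset by auto
    ultimately show ?thesis by auto
  qed auto
qed

lemma elem_sym_insert_Suc:
  assumes "finite A" "u \<notin> A"
  shows "elem_sym x (insert u A) (Suc l) = elem_sym x A (Suc l) + x u * elem_sym x A l"
proof -
  let ?K1 = "{S. S \<subseteq> A \<and> card S = Suc l}" and ?K0 = "{S. S \<subseteq> A \<and> card S = l}"
  have inj: "inj_on (insert u) ?K0"
    using assms(2) by (intro inj_onI) (metis (no_types, lifting) Diff_insert_absorb mem_Collect_eq subsetD)
  have "elem_sym x (insert u A) (Suc l) = (\<Sum>S\<in>?K1. prod x S) + (\<Sum>S\<in>insert u ` ?K0. prod x S)"
    unfolding elem_sym_def subsets_card_insert_Suc[OF assms]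
    using assms by (intro sum.union_disjoint) auto
  also have "(\<Sum>S\<in>insert u ` ?K0. prod x S) = (\<Sum>S\<in>?K0. x u * prod x S)"
    unfolding sum.reindex[OF inj] comp_def
  proof (rule sum.cong[OF refl])
    fix S assume "S \<in> ?K0"
    then have "finite S" "u \<notin> S" using assms finite_subset by auto
    then show "prod x (insert u S) = x u * prod x S" by simp
  qed
  finally show ?thesis by (simp add: elem_sym_def sum_distrib_left)
qed

lemma coeff_prod_pCons_one:
  "finite A \<Longrightarrow> coeff (\<Prod>i\<in>A. [:1, x i:]) l = elem_sym x A l"
proof (induction A arbitrary: l rule: finite_induct)
  case empty
  then show ?case by (cases l) simp_all
next
  case (insert u A)
  then show ?case
    by (cases l) (simp_all add: mult_pCons_left coeff_pCons elem_sym_insert_Suc)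
qed

lemma elem_sym_split:
  assumes "finite A" "R \<subseteq> A"
  shows "elem_sym x A k = (\<Sum>j\<le>k. elem_sym x R j * elem_sym x (A - R) (k - j))"
proof -
  have "(\<Prod>i\<in>A. [:1, x i:]) = (\<Prod>i\<in>R. [:1, x i:]) * (\<Prod>i\<in>A - R. [:1, x i:])"
    using prod.subset_diff[OF assms(2,1)] by (simp add: mult.commute)
  then show ?thesis
    using assms by (simp add: coeff_mult coeff_prod_pCons_one[symmetric] finite_subset)
qed

lemma elem_sym_nonneg: "(\<And>i. i \<in> A \<Longrightarrow> 0 \<le> x i) \<Longrightarrow> 0 \<le> elem_sym x A l"
  unfolding elem_sym_def by (auto intro!: sum_nonneg prod_nonneg)

lemma elem_sym_eq_0: "finite A \<Longrightarrow> card A < l \<Longrightarrow> elem_sym x A l = 0"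
  unfolding elem_sym_def by (auto dest: card_mono intro!: sum.neutral)

lemma elem_sym_1: "finite A \<Longrightarrow> elem_sym x A 1 = sum x A"
  by (induction A rule: finite_induct) (simp_all add: elem_sym_insert_Suc[where l = 0, simplified])

lemma elem_sym_Newton:
  assumes "finite A" "\<And>i. i \<in> A \<Longrightarrow> 0 \<le> x i"
  shows "real (Suc l) * elem_sym x A (Suc l) \<le> elem_sym x A 1 * elem_sym x A l"
  using assms
proof (induction A arbitrary: l rule: finite_induct)
  case (insert u A)
  let ?e = "elem_sym x A"
  have IH: "real (Suc j) * ?e (Suc j) \<le> ?e 1 * ?e j" for j
    using insert by simp
  have xu: "0 \<le> x u" and e_nonneg: "0 \<le> ?e j" for j
    using insert.prems by (auto intro: elem_sym_nonneg)
  show ?case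
  proof (cases l)
    case (Suc j)
    have "(?e 1 + x u) * (?e (Suc j) + x u * ?e j) - real (Suc (Suc j)) * (?e (Suc (Suc j)) + x u * ?e (Suc j))
        = (?e 1 * ?e (Suc j) - real (Suc (Suc j)) * ?e (Suc (Suc j)))
          + x u * (?e 1 * ?e j - real (Suc j) * ?e (Suc j)) + x u * x u * ?e j"
      by (simp add: algebra_simps)
    moreover have "0 \<le> x u * (?e 1 * ?e j - real (Suc j) * ?e (Suc j))"
      using IH[of j] xu by simp
    moreover have "0 \<le> x u * x u * ?e j" using xu e_nonneg by simp
    ultimately show ?thesis
      using IH[of "Suc j"] insert.hyps Suc
      by (simp add: elem_sym_insert_Suc elem_sym_insert_Suc[where l = 0, simplified])
  qed (use insert.hyps in simp)
qed simp

lemma elem_sym_le_power_div_fact: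
  assumes "finite A" "\<And>i. i \<in> A \<Longrightarrow> 0 \<le> x i"
  shows "elem_sym x A j \<le> sum x A ^ j / fact j"
proof (induction j)
  case (Suc j)
  have "real (Suc j) * elem_sym x A (Suc j) \<le> sum x A * elem_sym x A j"
    using elem_sym_Newton[of A x, OF assms] elem_sym_1[OF assms(1)] by simp
  also have "\<dots> \<le> sum x A * (sum x A ^ j / fact j)"
    using Suc assms by (intro mult_left_mono) (auto intro: sum_nonneg)
  finally have "real (Suc j) * elem_sym x A (Suc j) \<le> sum x A ^ Suc j / fact j" by simp
  then show ?case by (simp add: divide_simps ac_simps)
qed (use assms in simp)

lemma elem_sym_add_le:
  assumes "finite A" "\<And>i. i \<in> A \<Longrightarrow> 0 \<le> x i"
  shows "elem_sym x A (c + r) \<le> elem_sym x A c * (\<Prod>i=1..r. sum x A / real (c + i))"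
proof (induction r)
  case (Suc r)
  have "real (Suc (c + r)) * elem_sym x A (Suc (c + r)) \<le> sum x A * elem_sym x A (c + r)"
    using elem_sym_Newton[of A x, OF assms, of "c + r"] elem_sym_1[OF assms(1)] by simp
  then have "elem_sym x A (c + Suc r) \<le> sum x A / real (c + Suc r) * elem_sym x A (c + r)"
    by (simp add: field_simps)
  also have "\<dots> \<le> sum x A / real (c + Suc r) * (elem_sym x A c * (\<Prod>i=1..r. sum x A / real (c + i)))"
    using Suc assms by (intro mult_left_mono) (auto intro!: sum_nonneg divide_nonneg_nonneg)
  finally show ?case by (simp add: prod.nat_ivl_Suc' algebra_simps)
qed simp

lemma sum_power_div_fact_le_exp:
  assumes "0 \<le> (t::real)"
  shows "(\<Sum>j\<le>N. t ^ j / fact j) \<le> exp t"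
proof -
  have "(\<lambda>j. t ^ j / fact j) sums exp t"
    using exp_converges[of t] by (simp add: divide_inverse mult.commute)
  then have "(\<Sum>j\<le>N. t ^ j / fact j) \<le> (\<Sum>j. t ^ j / fact j)"
    using assms by (intro sum_le_suminf) (auto simp: sums_summable)
  then show ?thesis using \<open>(\<lambda>j. t ^ j / fact j) sums exp t\<close> sums_unique by metis
qed

lemma prod_ratio_le_exp:
  fixes a :: real and c :: nat
  assumes "0 \<le> a"
  shows "(\<Prod>i=1..r. (a + c) / real (c + i)) \<le> exp a"
proof -
  have "(\<Prod>i=1..r. (a + c) / real (c + i)) \<le> (\<Sum>j\<le>r. a ^ j / fact j)"
  proof (induction r)
    case (Suc r)
    let ?P = "\<Prod>i=1..r. (a + c) / real (c + i)" and ?q = "(a + c) / real (c + Suc r)"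
    have P_nonneg: "0 \<le> ?P" using assms by (intro prod_nonneg) auto
    have "?P * ?q \<le> (\<Sum>j\<le>Suc r. a ^ j / fact j)"
    proof (cases "?q \<le> 1")
      case True
      then have "?P * ?q \<le> (\<Sum>j\<le>r. a ^ j / fact j)"
        using Suc P_nonneg by (meson mult_left_le order_trans)
      also have "\<dots> \<le> (\<Sum>j\<le>Suc r. a ^ j / fact j)"
        using assms by (intro sum_mono2) auto
      finally show ?thesis .
    next
      case False
      then have "real (Suc r) \<le> a" by (simp add: field_simps)
      then have "real c * real (Suc r) \<le> real c * a" by (rule mult_left_mono) simp
      then have "?q \<le> a / real (Suc r)" by (simp add: divide_simps algebra_simps)
      then have "?P * ?q \<le> (\<Sum>j\<le>r. a ^ j / fact j) * (a / real (Suc r))"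
        using Suc P_nonneg assms by (intro mult_mono) auto
      also have "\<dots> \<le> (\<Sum>j\<le>r. a ^ Suc j / fact (Suc j))"
        unfolding sum_distrib_right
      proof (rule sum_mono)
        fix j assume "j \<in> {..r}"
        then have "a ^ j / fact j * (a / real (Suc r)) \<le> a ^ j / fact j * (a / real (Suc j))"
          using assms by (intro mult_left_mono divide_left_mono) auto
        then show "a ^ j / fact j * (a / real (Suc r)) \<le> a ^ Suc j / fact (Suc j)"
          by (simp add: field_simps)
      qed
      also have "\<dots> \<le> (\<Sum>j\<le>Suc r. a ^ j / fact j)"
        unfolding sum.atMost_Suc_shift[of "\<lambda>j. a ^ j / fact j"] by simp
      finally show ?thesis .
    qed
    then show ?case by (simp add: prod.nat_ivl_Suc' add_ac)
  qed simp
  then show ?thesis using sum_power_div_fact_le_exp[OF assms, of r] by linarith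
qed

text \<open>With t = sum x R, the part of e_k(x) of degree j in R is at most t^j/j! times
  e_(k-j)(x on I - R), and lowering the degree on I - R from k - j to k - m costs at most a
  factor e^(m - t), because sum x (I - R) = (k - m) + (m - t).\<close>

lemma elem_sym_le_exp_mult_elem_sym_diff:
  assumes fI: "finite I" and RI: "R \<subseteq> I" and mk: "card R \<le> k"
    and x01: "\<And>i. i \<in> I \<Longrightarrow> 0 \<le> x i \<and> x i \<le> 1" and sk: "sum x I = real k"
  shows "elem_sym x I k \<le> exp (card R) * elem_sym x (I - R) (k - card R)"
proof -
  define m where "m = card R"
  define B where "B = I - R"
  define t where "t = sum x R"
  define c where "c = k - m"
  define a where "a = real m - t"
  have fR: "finite R" and fB: "finite B" using fI RI finite_subset B_def by auto
  have xR: "\<And>i. i \<in> R \<Longrightarrow> 0 \<le> x i" and xB: "\<And>i. i \<in> B \<Longrightarrow> 0 \<le> x i"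
    using x01 RI B_def by auto
  have t0: "0 \<le> t" unfolding t_def using xR by (auto intro: sum_nonneg)
  have "t \<le> real m" unfolding t_def m_def using x01 RI sum_bounded_above[of R x 1] by auto
  then have a0: "0 \<le> a" unfolding a_def by simp
  have sB: "sum x B = a + real c"
    using sum.subset_diff[OF RI fI, of x] sk mk unfolding B_def t_def a_def c_def m_def by simp
  define C where "C = exp a * elem_sym x B c"
  have C0: "0 \<le> C" unfolding C_def using xB by (simp add: elem_sym_nonneg)
  have term_le: "elem_sym x R j * elem_sym x B (k - j) \<le> t ^ j / fact j * C" if "j \<le> k" for j
  proof (cases "j \<le> m")
    case True
    have kj: "k - j = c + (m - j)" using True mk that unfolding c_def m_def by simp
    have "elem_sym x B (k - j) \<le> elem_sym x B c * (\<Prod>i=1..m - j. sum x B / real (c + i))"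
      unfolding kj by (rule elem_sym_add_le[OF fB xB])
    also have "\<dots> \<le> C"
      unfolding C_def sB using prod_ratio_le_exp[OF a0, of c "m - j"] xB
      by (subst mult.commute) (intro mult_left_mono, auto simp: elem_sym_nonneg)
    finally show ?thesis
      using elem_sym_le_power_div_fact[of R x j, OF fR xR] t0 xR xB
      by (intro mult_mono) (auto simp: elem_sym_nonneg t_def)
  next
    case False
    then show ?thesis using elem_sym_eq_0[OF fR] C0 t0 m_def by simp
  qed
  have "elem_sym x I k = (\<Sum>j\<le>k. elem_sym x R j * elem_sym x B (k - j))"
    unfolding B_def by (rule elem_sym_split[OF fI RI])
  also have "\<dots> \<le> (\<Sum>j\<le>k. t ^ j / fact j) * C"
    unfolding sum_distrib_right by (rule sum_mono) (use term_le in simp)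
  also have "\<dots> \<le> exp t * C"
    using sum_power_div_fact_le_exp[OF t0] C0 by (rule mult_right_mono)
  also have "\<dots> = exp (real m) * elem_sym x B c" unfolding C_def a_def by (simp add: exp_diff)
  finally show ?thesis unfolding B_def c_def m_def .
qed

lemma sum_prod_supsets_card:
  assumes "finite I" "R \<subseteq> I" "card R \<le> k"
  shows "(\<Sum>S | S \<subseteq> I \<and> card S = k \<and> R \<subseteq> S. prod x S) =
    prod x R * elem_sym x (I - R) (k - card R)"
proof -
  have fR: "finite R" using assms finite_subset by blast
  have "(\<Sum>S | S \<subseteq> I \<and> card S = k \<and> R \<subseteq> S. prod x S)
      = (\<Sum>V | V \<subseteq> I - R \<and> card V = k - card R. prod x R * prod x V)"
  proof (rule sum.reindex_bij_witness[where j = "\<lambda>S. S - R" and i = "\<lambda>V. R \<union> V"])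
    fix S assume S: "S \<in> {S. S \<subseteq> I \<and> card S = k \<and> R \<subseteq> S}"
    then have "finite S" using assms(1) finite_subset by auto
    then show "R \<union> (S - R) = S" "S - R \<in> {V. V \<subseteq> I - R \<and> card V = k - card R}"
      "prod x R * prod x (S - R) = prod x S"
      using S fR prod.subset_diff[of R S x] by (auto simp: card_Diff_subset)
  next
    fix V assume V: "V \<in> {V. V \<subseteq> I - R \<and> card V = k - card R}"
    then have "finite V" using assms(1) finite_subset by blast
    then have "card (R \<union> V) = card R + card V" using V fR by (intro card_Un_disjoint) auto
    then show "R \<union> V - R = V" "R \<union> V \<in> {S. S \<subseteq> I \<and> card S = k \<and> R \<subseteq> S}"
      using V assms by auto
  qed
  then show ?thesis by (simp add: elem_sym_def sum_distrib_left)
qed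

lemma elem_sym_pos:
  assumes fI: "finite I" and x01: "\<And>i. i \<in> I \<Longrightarrow> 0 \<le> x i \<and> x i \<le> 1"
    and sk: "sum x I = real k"
  shows "0 < elem_sym x I k"
proof -
  define P where "P = {i \<in> I. 0 < x i}"
  have "real k = sum x P"
    unfolding sk[symmetric] P_def using fI x01 by (intro sum.mono_neutral_right) force+
  also have "\<dots> \<le> real (card P)" using x01 sum_bounded_above[of P x 1] by (auto simp: P_def)
  finally obtain T where T: "T \<subseteq> P" "card T = k"
    by (metis obtain_subset_with_card_n of_nat_le_iff)
  have "0 < prod x T" using T by (intro prod_pos) (auto simp: P_def)
  also have "\<dots> \<le> elem_sym x I k"
    unfolding elem_sym_def using T fI x01
    by (intro member_le_sum prod_nonneg) (auto simp: P_def)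
  finally show ?thesis .
qed

lemma det_linear_rows_sum_PiE:
  fixes g :: "'n::finite \<Rightarrow> 'b \<Rightarrow> real ^ 'n"
  assumes "finite S"
  shows "det (\<chi> i. \<Sum>j\<in>S. g i j) = (\<Sum>f\<in>UNIV \<rightarrow>\<^sub>E S. det (\<chi> i. g i (f i)))"
proof -
  have "(\<Prod>i\<in>UNIV. (\<chi> i. \<Sum>j\<in>S. g i j) $ i $ p i) =
      (\<Sum>f\<in>UNIV \<rightarrow>\<^sub>E S. \<Prod>i\<in>UNIV. g i (f i) $ p i)" for p
    by (simp add: sum_component prod_sum_PiE assms)
  then show ?thesis
    unfolding det_def by (simp add: sum_distrib_left sum.swap[where A = "{p. p permutes UNIV}"])
qed

lemma det_sum_scaleR_outer_expand:
  fixes a :: "'b \<Rightarrow> real ^ 'm"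
  assumes "finite S"
  shows "det (\<Sum>i\<in>S. c i *\<^sub>R outer (a i)) =
    (\<Sum>f | range f \<subseteq> S \<and> inj f.
      (\<Prod>r\<in>UNIV. c (f r)) * ((\<Prod>r\<in>UNIV. a (f r) $ r) * det (\<chi> r. a (f r))))"
proof -
  let ?h = "\<lambda>f. (\<Prod>r\<in>UNIV. a (f r) $ r) * det (\<chi> r. a (f r))"
  have rows: "(\<Sum>i\<in>S. c i *\<^sub>R outer (a i)) = (\<chi> r. \<Sum>i\<in>S. (c i * a i $ r) *s a i)"
    by (simp add: vec_eq_iff outer_def sum_component algebra_simps)
  have noninj: "det (\<chi> r. a (f r)) = 0" if "\<not> inj f" for f :: "'m \<Rightarrow> 'b"
  proof -
    obtain i j where "f i = f j" "i \<noteq> j" using \<open>\<not> inj f\<close> unfolding inj_def by blast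
    then show ?thesis by (intro det_identical_rows[of i j]) (simp_all add: row_def vec_eq_iff)
  qed
  have "det (\<Sum>i\<in>S. c i *\<^sub>R outer (a i)) =
      (\<Sum>f\<in>UNIV \<rightarrow>\<^sub>E S. (\<Prod>r\<in>UNIV. c (f r)) * ?h f)"
    unfolding rows det_linear_rows_sum_PiE[OF assms]
    by (simp add: det_rows_mul prod.distrib mult.assoc)
  also have "\<dots> = (\<Sum>f | range f \<subseteq> S \<and> inj f. (\<Prod>r\<in>UNIV. c (f r)) * ?h f)"
    using assms by (intro sum.mono_neutral_right finite_PiE) (auto simp: noninj)
  finally show ?thesis .
qed

lemma det_sum_scaleR_outer:
  fixes a :: "nat \<Rightarrow> real ^ 'm"
  assumes "finite S"
  shows "det (\<Sum>i\<in>S. c i *\<^sub>R outer (a i)) =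
    (\<Sum>R | R \<subseteq> S \<and> card R = CARD('m). prod c R * det (subset_mat a R))"
proof -
  let ?F = "\<lambda>S. {f :: 'm \<Rightarrow> nat. range f \<subseteq> S \<and> inj f}"
  let ?h = "\<lambda>f. (\<Prod>r\<in>UNIV. a (f r) $ r) * det (\<chi> r. a (f r))"
  have finF: "finite (?F S)"
    by (rule finite_subset[of _ "UNIV \<rightarrow>\<^sub>E S"]) (auto intro: finite_PiE assms)
  have inj_onto: "{f \<in> ?F S. range f = R} = ?F R" if R: "R \<subseteq> S" "card R = CARD('m)" for R
  proof -
    have "range f = R" if "f \<in> ?F R" for f
      using that R assms by (intro card_subset_eq) (auto simp: card_image finite_subset)
    then show ?thesis using R by auto
  qed
  have "det (\<Sum>i\<in>S. c i *\<^sub>R outer (a i)) = (\<Sum>f\<in>?F S. (\<Prod>r\<in>UNIV. c (f r)) * ?h f)"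
    by (rule det_sum_scaleR_outer_expand[OF assms])
  also have "\<dots> = (\<Sum>R | R \<subseteq> S \<and> card R = CARD('m).
      \<Sum>f | f \<in> ?F S \<and> range f = R. (\<Prod>r\<in>UNIV. c (f r)) * ?h f)"
    using assms by (intro sum.group[symmetric] finF) (auto simp: card_image)
  also have "\<dots> = (\<Sum>R | R \<subseteq> S \<and> card R = CARD('m). prod c R * (\<Sum>f\<in>?F R. ?h f))"
  proof (rule sum.cong[OF refl])
    fix R assume R: "R \<in> {R. R \<subseteq> S \<and> card R = CARD('m)}"
    have "(\<Prod>r\<in>UNIV. c (f r)) = prod c R" if "f \<in> ?F R" for f
    proof -
      have "range f = R" using that inj_onto[of R] R by blast
      then show ?thesis using that prod.reindex[of f UNIV c] by auto
    qed
    then show "(\<Sum>f | f \<in> ?F S \<and> range f = R. (\<Prod>r\<in>UNIV. c (f r)) * ?h f) =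
        prod c R * (\<Sum>f\<in>?F R. ?h f)"
      using inj_onto R by (simp add: sum_distrib_left)
  qed
  also have "\<dots> = (\<Sum>R | R \<subseteq> S \<and> card R = CARD('m). prod c R * det (subset_mat a R))"
    using assms det_sum_scaleR_outer_expand[of _ "\<lambda>_. 1" a]
    by (intro sum.cong) (auto simp: subset_mat_def finite_subset)
  finally show ?thesis .
qed

lemma det_subset_mat_eq_sum:
  "finite S \<Longrightarrow>
    det (subset_mat a S) = (\<Sum>R | R \<subseteq> S \<and> card R = CARD('m). det (subset_mat a R))"
  for a :: "nat \<Rightarrow> real ^ 'm"
  using det_sum_scaleR_outer[of S "\<lambda>_. 1" a] by (simp add: subset_mat_def)

lemma det_subset_mat_nonneg_card:
  fixes a :: "nat \<Rightarrow> real ^ 'm"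
  assumes "finite R" "card R = CARD('m)"
  shows "0 \<le> det (subset_mat a R)"
proof -
  obtain s where s: "bij_betw s (UNIV :: 'm set) R"
    using finite_same_card_bij[of "UNIV :: 'm set" R] assms by auto
  define B where "B = (\<chi> r. a (s r))"
  have "subset_mat a R = (\<Sum>r\<in>UNIV. outer (a (s r)))"
    unfolding subset_mat_def by (rule sum.reindex_bij_betw[OF s, symmetric])
  also have "\<dots> = transpose B ** B"
    by (simp add: vec_eq_iff B_def outer_def matrix_matrix_mult_def transpose_def sum_component)
  finally show ?thesis by (simp add: det_mul det_transpose)
qed

lemma det_subset_mat_nonneg: "finite S \<Longrightarrow> 0 \<le> det (subset_mat a S)"
  by (auto simp: det_subset_mat_eq_sum finite_subset intro!: sum_nonneg det_subset_mat_nonneg_card)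

lemma sum_prod_det_subset_mat_ge:
  fixes a :: "nat \<Rightarrow> real ^ 'm"
  assumes fI: "finite I" and mk: "CARD('m) \<le> k"
    and x01: "\<And>i. i \<in> I \<Longrightarrow> 0 \<le> x i \<and> x i \<le> 1" and sk: "sum x I = real k"
  shows "exp (- real CARD('m)) * elem_sym x I k * det (\<Sum>i\<in>I. x i *\<^sub>R outer (a i))
    \<le> (\<Sum>S | S \<subseteq> I \<and> card S = k. prod x S * det (subset_mat a S))"
proof -
  let ?K = "{S. S \<subseteq> I \<and> card S = k}" and ?M = "{R. R \<subseteq> I \<and> card R = CARD('m)}"
  let ?d = "\<lambda>R. det (subset_mat a R)"
  have "exp (- real CARD('m)) * elem_sym x I k * det (\<Sum>i\<in>I. x i *\<^sub>R outer (a i))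
      = (\<Sum>R\<in>?M. ?d R * (prod x R * (exp (- real CARD('m)) * elem_sym x I k)))"
    unfolding det_sum_scaleR_outer[OF fI] by (simp add: sum_distrib_left ac_simps)
  also have "\<dots> \<le> (\<Sum>R\<in>?M. ?d R * (prod x R * elem_sym x (I - R) (k - CARD('m))))"
  proof (rule sum_mono, rule mult_left_mono)
    fix R assume R: "R \<in> ?M"
    then have "exp (- real CARD('m)) * elem_sym x I k \<le> elem_sym x (I - R) (k - CARD('m))"
      using elem_sym_le_exp_mult_elem_sym_diff[OF fI _ _ x01 sk, of R] mk
      by (simp add: exp_minus field_simps)
    then show "prod x R * (exp (- real CARD('m)) * elem_sym x I k) \<le> prod x R * elem_sym x (I - R) (k - CARD('m))"
      using R x01 by (intro mult_left_mono prod_nonneg) auto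
    show "0 \<le> ?d R" using R fI by (intro det_subset_mat_nonneg) (auto dest: finite_subset)
  qed
  also have "\<dots> = (\<Sum>R\<in>?M. \<Sum>S | S \<in> ?K \<and> R \<subseteq> S. prod x S * ?d R)"
  proof (rule sum.cong[OF refl])
    fix R assume "R \<in> ?M"
    then have "prod x R * elem_sym x (I - R) (k - CARD('m)) = (\<Sum>S | S \<in> ?K \<and> R \<subseteq> S. prod x S)"
      using sum_prod_supsets_card[OF fI, of R k x] mk by (simp add: conj_assoc)
    then show "?d R * (prod x R * elem_sym x (I - R) (k - CARD('m))) =
        (\<Sum>S | S \<in> ?K \<and> R \<subseteq> S. prod x S * ?d R)"
      by (simp add: sum_distrib_left ac_simps)
  qed
  also have "\<dots> = (\<Sum>S\<in>?K. \<Sum>R | R \<in> ?M \<and> R \<subseteq> S. prod x S * ?d R)"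
    using fI by (intro sum.swap_restrict) auto
  also have "\<dots> = (\<Sum>S\<in>?K. prod x S * ?d S)"
  proof (rule sum.cong[OF refl])
    fix S assume "S \<in> ?K"
    then have "{R. R \<in> ?M \<and> R \<subseteq> S} = {R. R \<subseteq> S \<and> card R = CARD('m)}" "finite S"
      using fI finite_subset by auto
    then show "(\<Sum>R | R \<in> ?M \<and> R \<subseteq> S. prod x S * ?d R) = prod x S * ?d S"
      by (simp add: det_subset_mat_eq_sum sum_distrib_left)
  qed
  finally show ?thesis .
qed

lemma info_mat_indicator:
  "S \<subseteq> {1..n} \<Longrightarrow> info_mat n a (indicator S) = subset_mat a S"
proof -
  assume "S \<subseteq> {1..n}"
  then have "{i \<in> {1..n}. i \<in> S} = S" by auto
  then show ?thesis
    unfolding info_mat_def subset_mat_def using sum_indicator_scaleR[of "{1..n}" "\<lambda>_. S" id] by simp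
qed

lemma w_star_le_relax_optimal:
  fixes a :: "nat \<Rightarrow> real ^ 'm"
  assumes "k \<le> n" "relax_optimal n k a x w"
  shows "w_star n k a \<le> w"
proof -
  have "{1..k} \<in> ksubsets n k" using assms(1) by (simp add: ksubsets_def)
  moreover have "finite (ksubsets n k)" by (simp add: ksubsets_def)
  ultimately have "w_star n k a \<in> (\<lambda>S. root CARD('m) (det (subset_mat a S))) ` ksubsets n k"
    unfolding w_star_def by (intro Max_in) auto
  then obtain S where S: "S \<subseteq> {1..n}" "card S = k" and w: "w_star n k a = root CARD('m) (det (subset_mat a S))"
    by (auto simp: ksubsets_def)
  have "(\<Sum>i\<in>{1..n}. indicator S i) = real k"
    using S by (simp add: indicator_def Int_absorb1)
  then have "relax_feasible n k a (indicator S) (w_star n k a)"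
    using S unfolding relax_feasible_def w info_mat_indicator[OF S(1)] by (simp add: indicator_def)
  then show ?thesis using assms(2) unfolding relax_optimal_def by blast
qed

lemma w_star_nonneg: "k \<le> n \<Longrightarrow> 0 \<le> w_star n k a"
  unfolding w_star_def ksubsets_def
  by (subst Max_ge_iff) (auto intro!: exI[of _ "{1..k}"] det_subset_mat_nonneg)

theorem theorem1:
  fixes a :: "nat \<Rightarrow> real ^ 'm" and n k :: nat and xh :: "nat \<Rightarrow> real" and wh :: real
  assumes "CARD('m) \<le> k" and "k \<le> n"
    and "relax_optimal n k a xh wh"
  shows "root CARD('m) (expected_det n k a xh) \<ge> (1 / exp 1) * w_star n k a"
proof -
  let ?m = "CARD('m)" and ?D = "det (info_mat n a xh)"
  have feas: "wh \<le> root ?m ?D" "sum xh {1..n} = real k"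
    "\<And>i. i \<in> {1..n} \<Longrightarrow> 0 \<le> xh i \<and> xh i \<le> 1"
    using assms(3) by (auto simp: relax_optimal_def relax_feasible_def)
  have w: "0 \<le> w_star n k a" "w_star n k a \<le> wh"
    using w_star_nonneg w_star_le_relax_optimal assms(2,3) by blast+
  have "exp (- real ?m) * ?D \<le> expected_det n k a xh"
    using sum_prod_det_subset_mat_ge[OF _ assms(1) feas(3,2), of a] elem_sym_pos[OF _ feas(3,2)]
    by (simp add: expected_det_def sample_prob_def ksubsets_def elem_sym_def info_mat_def
        field_simps sum_divide_distrib[symmetric])
  then have "root ?m (exp (- real ?m) * ?D) \<le> root ?m (expected_det n k a xh)" by simp
  moreover have "root ?m (exp (- real ?m)) = exp (- 1)"
    using real_root_power_cancel[of ?m "exp (- 1)"] by (simp add: exp_of_nat_mult[symmetric])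
  moreover have "(1 / exp 1) * w_star n k a \<le> exp (- 1) * root ?m ?D"
    using w feas(1) by (simp add: exp_minus divide_inverse)
  ultimately show ?thesis by (simp add: real_root_mult)
qed

end
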